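(* Let $A_1$ and $A_2$ be finite-dimensional simple evolution algebras over a field $\mathbb{K}$ with associated directed graphs $E$ and $F$ (relative to natural bases). Let $d_1$ (resp. $d_2$) be the greatest common divisor of the lengths of all closed paths in $E$ (resp. $F$). Then: \begin{enumerate} \item[(i)] The evolution algebra $A_1\otimes A_2$ is simple if and only if $\gcd(d_1,d_2)=1$. In particular, if $E$ and $F$ have closed paths of coprime lengths, then $A_1\otimes A_2$ is simple. \item[(ii)] The evolution algebra $A_1\otimes A_2$ is semisimple, i.e. a direct sum of simple evolution algebras. \end{enumerate}
   Context: An evolution algebra over $\mathbb{K}$ is a $\mathbb{K}$-algebra with a basis $\{e_1,\dots,e_n\}$ (natural basis) such that $e_ie_j=0$ for $i\ne j$; its structure matrix $(\omega_{ij})$ is given by $e_i^2=\sum_j\omega_{ji}e_j$. Its associated directed graph relative to this basis has vertex set $\{1,\dots,n\}$ and an edge from $i$ to $j$ whenever $\omega_{ji}\neq0$. A path is a finite sequence of edges $f_1\cdots f_m$ with the range of $f_i$ equal to the source of $f_{i+1}$; it is closed if its range equals its source; its length is $m$. The tensor product $A_1\otimes A_2$ of evolution algebras with natural bases $\{a_i\}$, $\{b_p\}$ is an evolution algebra with natural basis $\{a_i\otimes b_p\}$ and product $(a\otimes b)(a'\otimes b')=aa'\otimes bb'$. A $\mathbb{K}$-algebra is simple if $A^2\neq 0$ and its only ideals are $0$ and $A$. *)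

theory Defs
  imports Main
begin

text \<open>A finite-dimensional evolution algebra over a field 'a is given by a finite index set S
(its natural basis) and its structure matrix w, where w j i is the coefficient of e_j in e_i^2.
Elements are coordinate functions supported on S.\<close>

definition evo_carrier :: "'i set \<Rightarrow> ('i \<Rightarrow> 'a::field) set" where
  "evo_carrier S = {x. \<forall>i. i \<notin> S \<longrightarrow> x i = 0}"

definition evo_mult :: "'i set \<Rightarrow> ('i \<Rightarrow> 'i \<Rightarrow> 'a::field) \<Rightarrow> ('i \<Rightarrow> 'a) \<Rightarrow> ('i \<Rightarrow> 'a) \<Rightarrow> ('i \<Rightarrow> 'a)" where
  "evo_mult S w x y = (\<lambda>j. if j \<in> S then (\<Sum>i\<in>S. x i * y i * w j i) else 0)"

definition is_subspace :: "('i \<Rightarrow> 'a::field) set \<Rightarrow> bool" where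
  "is_subspace V \<longleftrightarrow> (\<lambda>i. 0) \<in> V \<and> (\<forall>x\<in>V. \<forall>y\<in>V. (\<lambda>i. x i + y i) \<in> V)
     \<and> (\<forall>c. \<forall>x\<in>V. (\<lambda>i. c * x i) \<in> V)"

text \<open>J is an ideal of the (sub)algebra B, for the product of the evolution algebra (S,w).
(The product is commutative, so one-sided closure suffices.)\<close>
definition evo_ideal_of :: "'i set \<Rightarrow> ('i \<Rightarrow> 'i \<Rightarrow> 'a::field) \<Rightarrow> ('i \<Rightarrow> 'a) set \<Rightarrow> ('i \<Rightarrow> 'a) set \<Rightarrow> bool" where
  "evo_ideal_of S w B J \<longleftrightarrow> J \<subseteq> B \<and> is_subspace J \<and> (\<forall>x\<in>J. \<forall>y\<in>B. evo_mult S w x y \<in> J)"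

definition simple_sub :: "'i set \<Rightarrow> ('i \<Rightarrow> 'i \<Rightarrow> 'a::field) \<Rightarrow> ('i \<Rightarrow> 'a) set \<Rightarrow> bool" where
  "simple_sub S w B \<longleftrightarrow> (\<exists>x\<in>B. \<exists>y\<in>B. evo_mult S w x y \<noteq> (\<lambda>i. 0))
     \<and> (\<forall>J. evo_ideal_of S w B J \<longrightarrow> J = {\<lambda>i. 0} \<or> J = B)"

definition simple_evo :: "'i set \<Rightarrow> ('i \<Rightarrow> 'i \<Rightarrow> 'a::field) \<Rightarrow> bool" where
  "simple_evo S w \<longleftrightarrow> simple_sub S w (evo_carrier S)"

definition has_natural_basis :: "'i set \<Rightarrow> ('i \<Rightarrow> 'i \<Rightarrow> 'a::field) \<Rightarrow> ('i \<Rightarrow> 'a) set \<Rightarrow> bool" where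
  "has_natural_basis S w B \<longleftrightarrow> (\<exists>Bs. finite Bs \<and> Bs \<subseteq> B
     \<and> (\<forall>c. (\<lambda>i. \<Sum>b\<in>Bs. c b * b i) = (\<lambda>i. 0) \<longrightarrow> (\<forall>b\<in>Bs. c b = 0))
     \<and> B = {(\<lambda>i. \<Sum>b\<in>Bs. c b * b i) | c. True}
     \<and> (\<forall>b\<in>Bs. \<forall>b'\<in>Bs. b \<noteq> b' \<longrightarrow> evo_mult S w b b' = (\<lambda>i. 0)))"

definition semisimple_evo :: "'i set \<Rightarrow> ('i \<Rightarrow> 'i \<Rightarrow> 'a::field) \<Rightarrow> bool" where
  "semisimple_evo S w \<longleftrightarrow> (\<exists>\<I>. finite \<I>
     \<and> (\<forall>I\<in>\<I>. evo_ideal_of S w (evo_carrier S) I \<and> simple_sub S w I \<and> has_natural_basis S w I)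
     \<and> (\<forall>x\<in>evo_carrier S. \<exists>f. (\<forall>I\<in>\<I>. f I \<in> I) \<and> x = (\<lambda>i. \<Sum>I\<in>\<I>. f I i))
     \<and> (\<forall>f. (\<forall>I\<in>\<I>. f I \<in> I) \<and> (\<lambda>i. \<Sum>I\<in>\<I>. f I i) = (\<lambda>i. 0) \<longrightarrow> (\<forall>I\<in>\<I>. f I = (\<lambda>i. 0))))"

text \<open>Associated directed graph: edge i \<rightarrow> j iff w j i \<noteq> 0. Lengths of closed paths:
m \<ge> 1 such that there are vertices v 0, ..., v m in S with edges v k \<rightarrow> v (k+1) and v m = v 0.\<close>
definition closed_path_lengths :: "'i set \<Rightarrow> ('i \<Rightarrow> 'i \<Rightarrow> 'a::field) \<Rightarrow> nat set" where
  "closed_path_lengths S w = {m. 0 < m \<and> (\<exists>v. (\<forall>k\<le>m. v k \<in> S)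
       \<and> (\<forall>k<m. w (v (Suc k)) (v k) \<noteq> 0) \<and> v m = v 0)}"

definition period :: "'i set \<Rightarrow> ('i \<Rightarrow> 'i \<Rightarrow> 'a::field) \<Rightarrow> nat" where
  "period S w = Gcd (closed_path_lengths S w)"

definition tensor_struct :: "('i \<Rightarrow> 'i \<Rightarrow> 'a::field) \<Rightarrow> ('j \<Rightarrow> 'j \<Rightarrow> 'a) \<Rightarrow> ('i \<times> 'j \<Rightarrow> 'i \<times> 'j \<Rightarrow> 'a)" where
  "tensor_struct w1 w2 = (\<lambda>(j, q) (i, p). w1 j i * w2 q p)"

end

theory Submission
  imports Defs "HOL-Computational_Algebra.Group_Closure" "HOL-Library.Disjoint_Sets"
begin

text \<open>
  Let A be a finite evolution algebra with \<open>A\<^sup>2 = A\<close>, which holds when A is simple. For a set C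
  of vertices of its graph closed under edges, the span of \<open>{e\<^sub>k | k \<in> C}\<close> is an ideal. If moreover
  C is strongly connected and has no incoming edges, this ideal is simple: a nonzero element of a
  subideal gives some \<open>e\<^sub>u\<^sup>2\<close>, multiplying by basis vectors then gives \<open>e\<^sub>k\<^sup>2\<close> for every k
  reachable from u, and these span all \<open>e\<^sub>k\<close> because \<open>A\<^sup>2 = A\<close>. Hence A is simple iff its graph
  is strongly connected, and A is semisimple when reachability is an equivalence relation.

  The tensor product inherits \<open>A\<^sup>2 = A\<close>, and its graph is the tensor product of E and F: a walk
  of length n from (i, p) to (k, q) is a pair of walks of length n from i to k and from p to q.
  Reachability there is reflexive, and symmetric because one can go round closed walks until the
  lengths agree; this gives (ii). The product graph is strongly connected iff \<open>gcd d\<^sub>1 d\<^sub>2 = 1\<close>.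
  If it is, the return times at fixed vertices of E and F generate \<open>\<int>\<close> as a group, because a
  generator divides both \<open>d\<^sub>1\<close> and \<open>d\<^sub>2\<close>; this lets one lengthen any two walks to walks of equal
  length. Conversely, a walk from (i, p) to (k, p) through an edge i \<rightarrow> k gives closed walks
  whose lengths force \<open>gcd d\<^sub>1 d\<^sub>2 = 1\<close>.
\<close>

section \<open>Walks in tensor products of relations\<close>

definition strongly_connected :: "'a set \<Rightarrow> ('a \<times> 'a) set \<Rightarrow> bool" where
  "strongly_connected S E \<longleftrightarrow> (\<forall>x\<in>S. \<forall>y\<in>S. (x, y) \<in> E\<^sup>+)"

definition cycle_lengths :: "('a \<times> 'a) set \<Rightarrow> nat set" where
  "cycle_lengths E = {m. 0 < m \<and> (\<exists>v. (v, v) \<in> E ^^ m)}"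

definition tensor_rel :: "('a \<times> 'a) set \<Rightarrow> ('b \<times> 'b) set \<Rightarrow> (('a \<times> 'b) \<times> ('a \<times> 'b)) set" where
  "tensor_rel E1 E2 = {((i, p), (k, q)). (i, k) \<in> E1 \<and> (p, q) \<in> E2}"

lemma relpow_tensor_rel:
  "((i, p), (k, q)) \<in> tensor_rel E1 E2 ^^ n \<longleftrightarrow> (i, k) \<in> E1 ^^ n \<and> (p, q) \<in> E2 ^^ n"
proof (induction n arbitrary: k q)
  case (Suc n)
  then show ?case
    by (fastforce simp: tensor_rel_def)
qed simp

lemma relpow_cycle_mult: "(x, x) \<in> R ^^ a \<Longrightarrow> (x, x) \<in> R ^^ (t * a)"
  by (induction t) (auto dest: relpow_trans)

lemma trancl_relpowE:
  assumes "(x, y) \<in> R\<^sup>+"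
  obtains n where "0 < n" "(x, y) \<in> R ^^ n"
  using assms by (auto simp: trancl_power)

lemma trancl_tensor_rel_refl:
  assumes "strongly_connected S1 E1" and "strongly_connected S2 E2" and "u \<in> S1 \<times> S2"
  shows "(u, u) \<in> (tensor_rel E1 E2)\<^sup>+"
proof -
  obtain i p where u: "u = (i, p)" "i \<in> S1" "p \<in> S2"
    using assms(3) by blast
  then obtain m n where "0 < m" "(i, i) \<in> E1 ^^ m" "0 < n" "(p, p) \<in> E2 ^^ n"
    using assms(1,2) unfolding strongly_connected_def by (meson trancl_relpowE)
  then have "(i, i) \<in> E1 ^^ (n * m)" "(p, p) \<in> E2 ^^ (n * m)" "0 < n * m"
    using relpow_cycle_mult[where t = m and a = n] relpow_cycle_mult[where t = n and a = m]
    by (auto simp: mult.commute[of n m])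
  then show ?thesis
    unfolding u trancl_power relpow_tensor_rel by blast
qed

lemma sym_trancl_tensor_rel:
  assumes sc1: "strongly_connected S1 E1" and sc2: "strongly_connected S2 E2"
    and E1: "E1 \<subseteq> S1 \<times> S1" and E2: "E2 \<subseteq> S2 \<times> S2"
  shows "sym ((tensor_rel E1 E2)\<^sup>+)"
  unfolding sym_def split_paired_All
proof (intro allI impI)
  fix i p k q assume path: "((i, p), (k, q)) \<in> (tensor_rel E1 E2)\<^sup>+"
  obtain n where n: "0 < n" "(i, k) \<in> E1 ^^ n" "(p, q) \<in> E2 ^^ n"
    using path by (auto simp: trancl_power relpow_tensor_rel)
  then have "(i, k) \<in> E1\<^sup>+" "(p, q) \<in> E2\<^sup>+"
    unfolding trancl_power by blast+
  then have "(k, i) \<in> E1\<^sup>+" "(q, p) \<in> E2\<^sup>+"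
    using sc1 sc2 trancl_subset_Sigma[OF E1] trancl_subset_Sigma[OF E2]
    unfolding strongly_connected_def by blast+
  then obtain a b where a: "0 < a" "(k, i) \<in> E1 ^^ a" and b: "0 < b" "(q, p) \<in> E2 ^^ b"
    by (meson trancl_relpowE)
  obtain A B where A: "a + n = Suc A" and B: "b + n = Suc B"
    using a(1) b(1) by (metis add_gr_0 gr0_implies_Suc)
  \<comment> \<open>Going round the closed walks of lengths a + n at k and b + n at q equalises the lengths.\<close>
  have "(k, i) \<in> E1 ^^ (B * (a + n) + a)"
    using relpow_cycle_mult[OF relpow_trans[OF a(2) n(2)]] a(2) by (rule relpow_trans)
  moreover have "(q, p) \<in> E2 ^^ (A * (b + n) + b)"
    using relpow_cycle_mult[OF relpow_trans[OF b(2) n(3)]] b(2) by (rule relpow_trans)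
  moreover have "B * (a + n) + a = A * (b + n) + b"
  proof -
    have "B * (a + n) + a + n = (b + n) * (a + n)" using B by simp
    also have "\<dots> = A * (b + n) + b + n" using A by simp
    finally show ?thesis by simp
  qed
  ultimately show "((k, q), (i, p)) \<in> (tensor_rel E1 E2)\<^sup>+"
    using b(1) unfolding trancl_power relpow_tensor_rel by auto
qed

lemma cycle_length_eq_return_diff:
  assumes sc: "strongly_connected S E" and E: "E \<subseteq> S \<times> S" and k: "k \<in> S"
    and c: "c \<in> cycle_lengths E"
  obtains a where "(k, k) \<in> E ^^ a" and "(k, k) \<in> E ^^ (a + c)"
proof -
  obtain v where v: "0 < c" "(v, v) \<in> E ^^ c"
    using c by (auto simp: cycle_lengths_def)
  then have "(v, v) \<in> E\<^sup>+"
    unfolding trancl_power by blast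
  then have "v \<in> S"
    using trancl_subset_Sigma[OF E] by blast
  then obtain a b where a: "(k, v) \<in> E ^^ a" and b: "(v, k) \<in> E ^^ b"
    using sc k unfolding strongly_connected_def by (meson trancl_relpowE)
  have "(k, k) \<in> E ^^ (a + b)"
    using a b by (rule relpow_trans)
  moreover have "(k, k) \<in> E ^^ (a + c + b)"
    using relpow_trans[OF relpow_trans[OF a v(2)] b] .
  ultimately show ?thesis
    using that[of "a + b"] by (simp add: ac_simps)
qed

lemma group_closure_two_monoids:
  fixes M1 M2 :: "nat set"
  assumes "0 \<in> M1" "\<And>a b. a \<in> M1 \<Longrightarrow> b \<in> M1 \<Longrightarrow> a + b \<in> M1"
    and "0 \<in> M2" "\<And>a b. a \<in> M2 \<Longrightarrow> b \<in> M2 \<Longrightarrow> a + b \<in> M2"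
    and "x \<in> group_closure (int ` (M1 \<union> M2))"
  shows "\<exists>a\<in>M1. \<exists>a'\<in>M1. \<exists>b\<in>M2. \<exists>b'\<in>M2. x = int a - int a' + int b - int b'"
  using assms(5)
proof induction
  case (base s)
  then show ?case
    using assms(1,3) by force
next
  case (diff s t)
  then obtain a a' b b' c c' d d' where
    "a \<in> M1" "a' \<in> M1" "b \<in> M2" "b' \<in> M2" "s = int a - int a' + int b - int b'"
    "c \<in> M1" "c' \<in> M1" "d \<in> M2" "d' \<in> M2" "t = int c - int c' + int d - int d'"
    by blast
  then show ?case
    using assms(2,4)
    by (intro bexI[of _ "a + c'"] bexI[of _ "a' + c"] bexI[of _ "b + d'"] bexI[of _ "b' + d"]) auto
qed

lemma one_in_group_closure_return_lengths:
  assumes sc1: "strongly_connected S1 E1" and sc2: "strongly_connected S2 E2"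
    and E1: "E1 \<subseteq> S1 \<times> S1" and E2: "E2 \<subseteq> S2 \<times> S2"
    and coprime: "gcd (Gcd (cycle_lengths E1)) (Gcd (cycle_lengths E2)) = 1"
    and k: "k \<in> S1" and q: "q \<in> S2"
  shows "1 \<in> group_closure (int ` ({m. (k, k) \<in> E1 ^^ m} \<union> {m. (q, q) \<in> E2 ^^ m}))"
    (is "1 \<in> group_closure ?T")
proof -
  have "Gcd ?T dvd int c" if c: "c \<in> cycle_lengths E1 \<union> cycle_lengths E2" for c
  proof -
    obtain a where
      "(k, k) \<in> E1 ^^ a \<and> (k, k) \<in> E1 ^^ (a + c) \<or> (q, q) \<in> E2 ^^ a \<and> (q, q) \<in> E2 ^^ (a + c)"
      using c cycle_length_eq_return_diff[OF sc1 E1 k] cycle_length_eq_return_diff[OF sc2 E2 q]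
      by blast
    then have "int (a + c) - int a \<in> group_closure ?T"
      by (intro group_closure.diff group_closure.base insertI2 imageI) auto
    then have "Gcd ?T dvd int (a + c) - int a"
      by (metis Gcd_dvd Gcd_group_closure_eq_Gcd)
    then show ?thesis
      by simp
  qed
  then have "Gcd ?T dvd Gcd (int ` cycle_lengths E1)" "Gcd ?T dvd Gcd (int ` cycle_lengths E2)"
    by (auto intro: Gcd_greatest)
  then have "Gcd ?T dvd gcd (int (Gcd (cycle_lengths E1))) (int (Gcd (cycle_lengths E2)))"
    by simp
  then have "Gcd ?T = 1"
    using coprime by (simp add: gcd_int_int_eq)
  then show ?thesis
    using Gcd_in_group_closure[of ?T] by simp
qed

lemma walks_of_equal_length:
  assumes sc1: "strongly_connected S1 E1" and sc2: "strongly_connected S2 E2"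
    and E1: "E1 \<subseteq> S1 \<times> S1" and E2: "E2 \<subseteq> S2 \<times> S2"
    and coprime: "gcd (Gcd (cycle_lengths E1)) (Gcd (cycle_lengths E2)) = 1"
    and ik: "i \<in> S1" "k \<in> S1" and pq: "p \<in> S2" "q \<in> S2"
  obtains n where "0 < n" "(i, k) \<in> E1 ^^ n" "(p, q) \<in> E2 ^^ n"
proof -
  define M1 where "M1 = {m. (k, k) \<in> E1 ^^ m}"
  define M2 where "M2 = {m. (q, q) \<in> E2 ^^ m}"
  have M1: "0 \<in> M1" "\<And>a b. a \<in> M1 \<Longrightarrow> b \<in> M1 \<Longrightarrow> a + b \<in> M1"
    "\<And>a t. a \<in> M1 \<Longrightarrow> t * a \<in> M1"
    unfolding M1_def by (auto intro: relpow_trans relpow_cycle_mult)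
  have M2: "0 \<in> M2" "\<And>a b. a \<in> M2 \<Longrightarrow> b \<in> M2 \<Longrightarrow> a + b \<in> M2"
    "\<And>a t. a \<in> M2 \<Longrightarrow> t * a \<in> M2"
    unfolding M2_def by (auto intro: relpow_trans relpow_cycle_mult)
  obtain r where r: "0 < r" "(i, k) \<in> E1 ^^ r"
    using sc1 ik unfolding strongly_connected_def by (meson trancl_relpowE)
  obtain s where s: "(p, q) \<in> E2 ^^ s"
    using sc2 pq unfolding strongly_connected_def by (meson trancl_relpowE)
  obtain c1 where c1: "0 < c1" "(k, k) \<in> E1 ^^ c1"
    using sc1 ik(2) unfolding strongly_connected_def by (meson trancl_relpowE)
  obtain c2 where c2: "0 < c2" "(q, q) \<in> E2 ^^ c2"
    using sc2 pq(2) unfolding strongly_connected_def by (meson trancl_relpowE)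
  have "1 \<in> group_closure (int ` (M1 \<union> M2))"
    using one_in_group_closure_return_lengths[OF sc1 sc2 E1 E2 coprime ik(2) pq(2)]
    unfolding M1_def M2_def .
  then have "(int s - int r) * 1 \<in> group_closure (int ` (M1 \<union> M2))"
    by (rule group_closure_mult_right)
  then obtain a a' b b' where ab: "a \<in> M1" "a' \<in> M1" "b \<in> M2" "b' \<in> M2"
    and "int s - int r = int a - int a' + int b - int b'"
    using group_closure_two_monoids[OF M1(1,2) M2(1,2)] by (metis mult.right_neutral)
  then have eq: "r + a + b = s + a' + b'"
    by linarith
  obtain N where N: "c1 * c2 = Suc N"
    using c1(1) c2(1) gr0_implies_Suc[of "c1 * c2"] by auto
  \<comment> \<open>Since Suc N is a multiple of both c1 and c2, Suc N * b lies in M1 and Suc N * a' in M2.\<close>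
  have "Suc N * b \<in> M1" "Suc N * a' \<in> M2"
    using M1(3)[of c1 "c2 * b"] M2(3)[of c2 "c1 * a'"] c1(2) c2(2) N
    unfolding M1_def M2_def by (simp_all add: ac_simps)
  then have "a + Suc N * b + N * a' \<in> M1" "Suc N * a' + b' + N * b \<in> M2"
    using ab by (simp_all add: M1(2,3) M2(2,3))
  then have "(i, k) \<in> E1 ^^ (r + (a + Suc N * b + N * a'))"
    and "(p, q) \<in> E2 ^^ (s + (Suc N * a' + b' + N * b))"
    using r(2) s unfolding M1_def M2_def by (auto intro: relpow_trans)
  moreover have "s + (Suc N * a' + b' + N * b) = r + (a + Suc N * b + N * a')"
    using eq unfolding mult_Suc by linarith
  ultimately show ?thesis
    using that[of "r + (a + Suc N * b + N * a')"] r(1) by (simp only:)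
qed

lemma strongly_connected_tensor_rel_iff:
  assumes sc1: "strongly_connected S1 E1" and sc2: "strongly_connected S2 E2"
    and E1: "E1 \<subseteq> S1 \<times> S1" and E2: "E2 \<subseteq> S2 \<times> S2"
    and "S1 \<noteq> {}" and "S2 \<noteq> {}"
  shows "strongly_connected (S1 \<times> S2) (tensor_rel E1 E2)
    \<longleftrightarrow> gcd (Gcd (cycle_lengths E1)) (Gcd (cycle_lengths E2)) = 1"
    (is "?sc \<longleftrightarrow> ?g = 1")
proof
  assume sc: ?sc
  obtain i p where i: "i \<in> S1" and p: "p \<in> S2"
    using assms(5,6) by blast
  then have "(i, i) \<in> E1\<^sup>+"
    using sc1 unfolding strongly_connected_def by blast
  then obtain k where ik: "(i, k) \<in> E1"
    by (blast dest: tranclD)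
  then have k: "k \<in> S1"
    using E1 by blast
  then have "((i, p), (k, p)) \<in> (tensor_rel E1 E2)\<^sup>+" "(k, i) \<in> E1\<^sup>+"
    using sc sc1 i p unfolding strongly_connected_def by auto
  then obtain n m where n: "0 < n" "(i, k) \<in> E1 ^^ n" "(p, p) \<in> E2 ^^ n"
    and m: "(k, i) \<in> E1 ^^ m"
    unfolding trancl_power relpow_tensor_rel by blast
  have "(i, i) \<in> E1 ^^ (n + m)" "(i, i) \<in> E1 ^^ Suc m"
    using relpow_trans[OF n(2) m] relpow_Suc_I2[OF ik m] .
  then have "n + m \<in> cycle_lengths E1" "Suc m \<in> cycle_lengths E1" "n \<in> cycle_lengths E2"
    using n unfolding cycle_lengths_def by auto
  then have "?g dvd n + m" "?g dvd Suc m" "?g dvd n"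
    by (auto intro: dvd_trans[OF gcd_dvd1 Gcd_dvd] dvd_trans[OF gcd_dvd2 Gcd_dvd])
  then have "?g dvd m"
    by (simp add: dvd_add_right_iff)
  then show "?g = 1"
    using \<open>?g dvd Suc m\<close> dvd_add_right_iff[of ?g m 1] by simp
next
  assume "?g = 1"
  then have "((i, p), (k, q)) \<in> (tensor_rel E1 E2)\<^sup>+"
    if "i \<in> S1" "p \<in> S2" "k \<in> S1" "q \<in> S2" for i p k q
    using walks_of_equal_length[OF sc1 sc2 E1 E2 _ that(1,3,2,4)]
    unfolding trancl_power relpow_tensor_rel by metis
  then show ?sc
    unfolding strongly_connected_def by auto
qed

section \<open>Coordinate subspaces of evolution algebras\<close>

definition evo_graph :: "'i set \<Rightarrow> ('i \<Rightarrow> 'i \<Rightarrow> 'a::field) \<Rightarrow> ('i \<times> 'i) set" where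
  "evo_graph S w = {(i, k). i \<in> S \<and> k \<in> S \<and> w k i \<noteq> 0}"

definition evo_basis :: "'i \<Rightarrow> 'i \<Rightarrow> 'a::field" where
  "evo_basis k = (\<lambda>i. if i = k then 1 else 0)"

text \<open>\<open>evo_sq S w k\<close> is \<open>e\<^sub>k\<^sup>2\<close> and \<open>evo_sq_comb S w c\<close> is \<open>\<Sum>\<^sub>i c\<^sub>i e\<^sub>i\<^sup>2\<close>, so the
  range of the latter is the square \<open>A\<^sup>2\<close> of the algebra.\<close>

definition evo_sq :: "'i set \<Rightarrow> ('i \<Rightarrow> 'i \<Rightarrow> 'a::field) \<Rightarrow> 'i \<Rightarrow> 'i \<Rightarrow> 'a" where
  "evo_sq S w k = (\<lambda>j. if j \<in> S then w j k else 0)"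

definition evo_sq_comb :: "'i set \<Rightarrow> ('i \<Rightarrow> 'i \<Rightarrow> 'a::field) \<Rightarrow> ('i \<Rightarrow> 'a) \<Rightarrow> 'i \<Rightarrow> 'a" where
  "evo_sq_comb S w c = (\<lambda>j. if j \<in> S then (\<Sum>i\<in>S. c i * w j i) else 0)"

lemma evo_graph_subset: "evo_graph S w \<subseteq> S \<times> S"
  by (auto simp: evo_graph_def)

lemma evo_graph_tensor_struct:
  "evo_graph (S1 \<times> S2) (tensor_struct w1 w2) = tensor_rel (evo_graph S1 w1) (evo_graph S2 w2)"
  by (auto simp: evo_graph_def tensor_rel_def tensor_struct_def)

lemma closed_path_lengths_eq_cycle_lengths:
  "closed_path_lengths S w = cycle_lengths (evo_graph S w)"
proof (intro set_eqI iffI)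
  fix m assume "m \<in> closed_path_lengths S w"
  then obtain v where v: "0 < m" "\<forall>k\<le>m. v k \<in> S" "\<forall>k<m. w (v (Suc k)) (v k) \<noteq> 0" "v m = v 0"
    by (auto simp: closed_path_lengths_def)
  then have "(v 0, v 0) \<in> evo_graph S w ^^ m"
    unfolding relpow_fun_conv by (intro exI[of _ v]) (auto simp: evo_graph_def)
  then show "m \<in> cycle_lengths (evo_graph S w)"
    using v(1) by (auto simp: cycle_lengths_def)
next
  fix m assume "m \<in> cycle_lengths (evo_graph S w)"
  then obtain u where m: "0 < m" "(u, u) \<in> evo_graph S w ^^ m"
    by (auto simp: cycle_lengths_def)
  then obtain v where v: "v 0 = u" "v m = u" "\<forall>k<m. (v k, v (Suc k)) \<in> evo_graph S w"
    unfolding relpow_fun_conv by auto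
  have "v k \<in> S" if "k \<le> m" for k
  proof (cases "k < m")
    case False
    then have "v k = v 0"
      using that v(1,2) by simp
    then show ?thesis
      using v(3) m(1) by (auto simp: evo_graph_def)
  qed (use v(3) in \<open>auto simp: evo_graph_def\<close>)
  then show "m \<in> closed_path_lengths S w"
    using m(1) v unfolding closed_path_lengths_def by (auto simp: evo_graph_def)
qed

lemma evo_basis_in_evo_carrier_iff [simp]: "evo_basis k \<in> evo_carrier C \<longleftrightarrow> k \<in> C"
  by (auto simp: evo_carrier_def evo_basis_def)

lemma evo_basis_neq_zero: "evo_basis k \<noteq> (\<lambda>i. 0)"
  by (auto simp: evo_basis_def fun_eq_iff)

lemma evo_carrier_mono: "C \<subseteq> D \<Longrightarrow> evo_carrier C \<subseteq> evo_carrier D"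
  by (auto simp: evo_carrier_def)

lemma evo_carrier_inj:
  assumes "(evo_carrier A :: ('i \<Rightarrow> 'a::field) set) = evo_carrier B"
  shows "A = B"
proof -
  have "(evo_basis k :: 'i \<Rightarrow> 'a) \<in> evo_carrier A \<longleftrightarrow> evo_basis k \<in> evo_carrier B" for k
    using assms by simp
  then show ?thesis
    by auto
qed

lemma evo_carrier_expansion:
  assumes "finite C" and "x \<in> evo_carrier C"
  shows "x = (\<lambda>j. \<Sum>k\<in>C. x k * evo_basis k j)"
  using assms by (auto simp: evo_carrier_def evo_basis_def fun_eq_iff if_distrib cong: if_cong)

lemma is_subspace_evo_carrier: "is_subspace (evo_carrier C)"
  by (auto simp: is_subspace_def evo_carrier_def)

lemma is_subspace_scale: "is_subspace V \<Longrightarrow> x \<in> V \<Longrightarrow> (\<lambda>i. c * x i) \<in> V"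
  by (simp add: is_subspace_def)

lemma is_subspace_sum:
  assumes "is_subspace V" and "\<And>a. a \<in> A \<Longrightarrow> f a \<in> V"
  shows "(\<lambda>i. \<Sum>a\<in>A. f a i) \<in> V"
proof (cases "finite A")
  case True
  then show ?thesis
    using assms(2)
  proof (induction A rule: finite_induct)
    case (insert a A)
    then show ?case
      using assms(1) unfolding is_subspace_def by simp
  qed (use assms(1) in \<open>simp add: is_subspace_def\<close>)
qed (use assms(1) in \<open>simp add: is_subspace_def\<close>)

lemma evo_mult_eq_sq_comb: "evo_mult S w x y = evo_sq_comb S w (\<lambda>i. x i * y i)"
  by (simp add: evo_mult_def evo_sq_comb_def)

lemma evo_mult_evo_basis:
  assumes "finite S" and "u \<in> S"
  shows "evo_mult S w x (evo_basis u) = (\<lambda>j. x u * evo_sq S w u j)"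
proof -
  have "(\<Sum>i\<in>S. x i * evo_basis u i * w j i) = (\<Sum>i\<in>S. if i = u then x u * w j u else 0)" for j
    by (rule sum.cong) (auto simp: evo_basis_def)
  then show ?thesis
    using assms by (simp add: evo_mult_def evo_sq_def fun_eq_iff)
qed

lemma evo_sq_comb_evo_carrier:
  assumes "finite S" and "C \<subseteq> S" and "c \<in> evo_carrier C"
  shows "evo_sq_comb S w c = (\<lambda>j. \<Sum>m\<in>C. c m * evo_sq S w m j)"
proof -
  have "(\<Sum>i\<in>S. c i * w j i) = (\<Sum>i\<in>C. c i * w j i)" for j
    using assms by (intro sum.mono_neutral_right) (auto simp: evo_carrier_def)
  then show ?thesis
    by (auto simp: evo_sq_comb_def evo_sq_def fun_eq_iff)
qed

lemma evo_mult_eq_zero_if_no_edges: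
  assumes "evo_graph S w = {}"
  shows "evo_mult S w x y = (\<lambda>j. 0)"
  using assms by (auto simp: evo_mult_def evo_graph_def fun_eq_iff intro!: sum.neutral)

lemma evo_ideal_evo_carrier:
  fixes w :: "'i \<Rightarrow> 'i \<Rightarrow> 'a::field"
  assumes "C \<subseteq> S" and closed: "evo_graph S w `` C \<subseteq> C"
  shows "evo_ideal_of S w (evo_carrier S) (evo_carrier C)"
  unfolding evo_ideal_of_def
proof (intro conjI ballI is_subspace_evo_carrier evo_carrier_mono[OF assms(1)])
  fix x y :: "'i \<Rightarrow> 'a" assume x: "x \<in> evo_carrier C"
  have "x m * y m * w j m = 0" if "j \<in> S - C" "m \<in> S" for j m
    using x closed that by (cases "m \<in> C") (auto simp: evo_carrier_def evo_graph_def)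
  then show "evo_mult S w x y \<in> evo_carrier C"
    by (auto simp: evo_carrier_def evo_mult_def intro!: sum.neutral)
qed

lemma simple_evo_ideal_cases:
  assumes "simple_evo S w" and "evo_ideal_of S w (evo_carrier S) J"
  shows "J = {\<lambda>i. 0} \<or> J = evo_carrier S"
proof -
  have "\<forall>J. evo_ideal_of S w (evo_carrier S) J \<longrightarrow> J = {\<lambda>i. 0} \<or> J = evo_carrier S"
    using assms(1) unfolding simple_evo_def simple_sub_def by (rule conjunct2)
  then show ?thesis
    using assms(2) by blast
qed

lemma simple_evo_nonempty: "simple_evo S w \<Longrightarrow> S \<noteq> {}"
  using evo_mult_eq_zero_if_no_edges[of "{}" w] unfolding simple_evo_def simple_sub_def
  by (auto simp: evo_graph_def)

lemma simple_evo_square: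
  assumes "simple_evo S w"
  shows "evo_carrier S \<subseteq> range (evo_sq_comb S w)"
proof -
  have "evo_sq_comb S w c \<in> evo_carrier S" for c
    by (simp add: evo_sq_comb_def evo_carrier_def)
  moreover have "(\<lambda>i. evo_sq_comb S w c i + evo_sq_comb S w d i) = evo_sq_comb S w (\<lambda>i. c i + d i)"
    "(\<lambda>i. a * evo_sq_comb S w c i) = evo_sq_comb S w (\<lambda>i. a * c i)" for a c d
    by (auto simp: evo_sq_comb_def fun_eq_iff sum.distrib sum_distrib_left algebra_simps)
  moreover have "(\<lambda>i. 0) = evo_sq_comb S w (\<lambda>i. 0)"
    by (simp add: evo_sq_comb_def fun_eq_iff)
  ultimately have "evo_ideal_of S w (evo_carrier S) (range (evo_sq_comb S w))"
    unfolding evo_ideal_of_def is_subspace_def evo_mult_eq_sq_comb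
    by (auto simp: image_iff)
  then have "range (evo_sq_comb S w) = {\<lambda>i. 0} \<or> range (evo_sq_comb S w) = evo_carrier S"
    by (rule simple_evo_ideal_cases[OF assms])
  moreover obtain x y where "evo_sq_comb S w (\<lambda>i. x i * y i) \<noteq> (\<lambda>i. 0)"
    using assms unfolding simple_evo_def simple_sub_def evo_mult_eq_sq_comb by blast
  moreover have "evo_sq_comb S w (\<lambda>i. x i * y i) \<in> range (evo_sq_comb S w)"
    by (rule rangeI)
  ultimately show ?thesis
    by auto
qed

lemma simple_evo_strongly_connected:
  fixes w :: "'i \<Rightarrow> 'i \<Rightarrow> 'a::field"
  assumes simple: "simple_evo S w"
  shows "strongly_connected S (evo_graph S w)"
  unfolding strongly_connected_def
proof (intro ballI)
  fix i k assume i: "i \<in> S" and k: "k \<in> S"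
  let ?E = "evo_graph S w"
  have ideals: "evo_carrier C = {\<lambda>i. 0 :: 'a} \<or> evo_carrier C = (evo_carrier S :: ('i \<Rightarrow> 'a) set)"
    if "C \<subseteq> S" "?E `` C \<subseteq> C" for C
    using simple_evo_ideal_cases[OF simple evo_ideal_evo_carrier[OF that]] .
  have nonzero: "evo_carrier C \<noteq> {\<lambda>i. 0 :: 'a}" if "c \<in> C" for c C
    using that evo_basis_neq_zero[of c] by (metis evo_basis_in_evo_carrier_iff singletonD)
  define T where "T = ?E\<^sup>+ `` {i}"
  have "T \<subseteq> S"
    using trancl_subset_Sigma[OF evo_graph_subset] unfolding T_def by blast
  moreover have "?E `` T \<subseteq> T"
    unfolding T_def by (auto intro: trancl_into_trancl)
  ultimately consider "evo_carrier T = {\<lambda>i. 0 :: 'a}" | "evo_carrier T = (evo_carrier S :: ('i \<Rightarrow> 'a) set)"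
    using ideals by blast
  then show "(i, k) \<in> ?E\<^sup>+"
  proof cases
    case 1
    \<comment> \<open>Then i is a sink, so \<open>{i}\<close> spans a nonzero ideal; hence S = {i} and A^2 = 0.\<close>
    then have "T = {}"
      using nonzero[of _ T] ex_in_conv by metis
    then have sink: "?E `` {i} = {}"
      unfolding T_def by blast
    then have "evo_carrier {i} = (evo_carrier S :: ('i \<Rightarrow> 'a) set)"
      using ideals[of "{i}"] nonzero[of i "{i}"] i by blast
    then have "S = {i}"
      by (rule evo_carrier_inj[symmetric])
    then have "?E = {}"
      using sink evo_graph_subset[of S w] by blast
    then have "evo_mult S w x y = (\<lambda>j. 0)" for x y
      by (rule evo_mult_eq_zero_if_no_edges)
    then show ?thesis
      using simple unfolding simple_evo_def simple_sub_def by blast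
  next
    case 2
    then have "T = S"
      by (rule evo_carrier_inj)
    then show ?thesis
      using k unfolding T_def by blast
  qed
qed

lemma evo_ideal_evo_sq_mem:
  fixes w :: "'i \<Rightarrow> 'i \<Rightarrow> 'a::field"
  assumes fin: "finite S" and CS: "C \<subseteq> S" and J: "evo_ideal_of S w (evo_carrier C) J"
    and y: "y \<in> J" and v: "v \<in> C" "y v \<noteq> 0"
  shows "evo_sq S w v \<in> J"
proof -
  have Jsub: "is_subspace J"
    using J unfolding evo_ideal_of_def by auto
  have "evo_mult S w y (evo_basis v) \<in> J"
    using J y v(1) unfolding evo_ideal_of_def by auto
  moreover have "v \<in> S"
    using CS v(1) by blast
  ultimately have "(\<lambda>j. y v * evo_sq S w v j) \<in> J"
    using evo_mult_evo_basis[OF fin, of v w y] by simp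
  then have "(\<lambda>j. inverse (y v) * (y v * evo_sq S w v j)) \<in> J"
    by (rule is_subspace_scale[OF Jsub])
  then show ?thesis
    using v(2) by (simp add: mult.assoc[symmetric])
qed

lemma evo_ideal_eq_evo_carrier:
  fixes w :: "'i \<Rightarrow> 'i \<Rightarrow> 'a::field"
  assumes fin: "finite S" and CS: "C \<subseteq> S" and closed: "evo_graph S w `` C \<subseteq> C"
    and sc: "\<forall>i\<in>C. \<forall>k\<in>C. (i, k) \<in> (evo_graph S w)\<^sup>+"
    and square: "\<forall>k\<in>C. \<exists>c\<in>evo_carrier C. evo_basis k = evo_sq_comb S w c"
    and J: "evo_ideal_of S w (evo_carrier C) J" and x: "x \<in> J" "x \<noteq> (\<lambda>i. 0)"
  shows "J = evo_carrier C"
proof -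
  let ?E = "evo_graph S w"
  have JC: "J \<subseteq> evo_carrier C" and Jsub: "is_subspace J"
    using J unfolding evo_ideal_of_def by auto
  obtain u where u: "x u \<noteq> 0"
    using x(2) by auto
  then have "u \<in> C"
    using JC x(1) by (auto simp: evo_carrier_def)
  have "v \<in> C \<and> evo_sq S w v \<in> J" if "(u, v) \<in> ?E\<^sup>*" for v
    using that
  proof induction
    case base
    show ?case
      using evo_ideal_evo_sq_mem[OF fin CS J x(1) \<open>u \<in> C\<close> u] \<open>u \<in> C\<close> by simp
  next
    case (step y z)
    then have "z \<in> C" "z \<in> S" "evo_sq S w y z \<noteq> 0"
      using closed by (auto simp: evo_graph_def evo_sq_def)
    then show ?case
      using evo_ideal_evo_sq_mem[OF fin CS J] step.IH by blast
  qed
  moreover have "(u, k) \<in> ?E\<^sup>*" if "k \<in> C" for k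
    using sc \<open>u \<in> C\<close> that by (simp add: trancl_into_rtrancl)
  ultimately have sq_in: "evo_sq S w k \<in> J" if "k \<in> C" for k
    using that by simp
  have basis_in: "evo_basis k \<in> J" if k: "k \<in> C" for k
  proof -
    obtain c where "c \<in> evo_carrier C" "evo_basis k = evo_sq_comb S w c"
      using square k by blast
    then have "evo_basis k = (\<lambda>j. \<Sum>m\<in>C. c m * evo_sq S w m j)"
      using evo_sq_comb_evo_carrier[OF fin CS] by simp
    also have "\<dots> \<in> J"
      by (auto intro!: is_subspace_sum[OF Jsub] is_subspace_scale[OF Jsub] sq_in)
    finally show ?thesis .
  qed
  have "y \<in> J" if "y \<in> evo_carrier C" for y
  proof -
    have "(\<lambda>j. \<Sum>k\<in>C. y k * evo_basis k j) \<in> J"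
      by (auto intro!: is_subspace_sum[OF Jsub] is_subspace_scale[OF Jsub] basis_in)
    then show ?thesis
      using evo_carrier_expansion[OF finite_subset[OF CS fin] that] by simp
  qed
  then show ?thesis
    using JC by auto
qed

lemma simple_sub_evo_carrier:
  fixes w :: "'i \<Rightarrow> 'i \<Rightarrow> 'a::field"
  assumes fin: "finite S" and CS: "C \<subseteq> S" and "C \<noteq> {}" and closed: "evo_graph S w `` C \<subseteq> C"
    and sc: "\<forall>i\<in>C. \<forall>k\<in>C. (i, k) \<in> (evo_graph S w)\<^sup>+"
    and square: "\<forall>k\<in>C. \<exists>c\<in>evo_carrier C. evo_basis k = evo_sq_comb S w c"
  shows "simple_sub S w (evo_carrier C)"
  unfolding simple_sub_def
proof (intro conjI allI impI)
  obtain u where u: "u \<in> C"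
    using \<open>C \<noteq> {}\<close> by blast
  then obtain v where "(u, v) \<in> evo_graph S w"
    using sc by (blast dest: tranclD)
  then have "u \<in> S" and "evo_mult S w (evo_basis u) (evo_basis u) v \<noteq> (0::'a)"
    using evo_mult_evo_basis[OF fin, of u w "evo_basis u"] by (auto simp: evo_graph_def evo_basis_def evo_sq_def)
  then have "evo_mult S w (evo_basis u) (evo_basis u) \<noteq> (\<lambda>i. 0)"
    by auto
  then show "\<exists>x\<in>evo_carrier C. \<exists>y\<in>evo_carrier C. evo_mult S w x y \<noteq> (\<lambda>i. 0)"
    using u by auto
next
  fix J assume J: "evo_ideal_of S w (evo_carrier C) J"
  show "J = {\<lambda>i. 0} \<or> J = evo_carrier C"
  proof (cases "J \<subseteq> {\<lambda>i. 0}")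
    case True
    moreover have "(\<lambda>i. 0) \<in> J"
      using J by (simp add: evo_ideal_of_def is_subspace_def)
    ultimately show ?thesis
      by blast
  next
    case False
    then obtain x where "x \<in> J" "x \<noteq> (\<lambda>i. 0)"
      by blast
    then show ?thesis
      using evo_ideal_eq_evo_carrier[OF fin CS closed sc square J] by blast
  qed
qed

lemma has_natural_basis_evo_carrier:
  fixes w :: "'i \<Rightarrow> 'i \<Rightarrow> 'a::field"
  assumes fin: "finite C"
  shows "has_natural_basis S w (evo_carrier C)"
proof -
  let ?B = "evo_basis ` C :: ('i \<Rightarrow> 'a) set"
  have inj: "inj_on (evo_basis :: 'i \<Rightarrow> 'i \<Rightarrow> 'a) C"
    by (rule inj_onI) (metis evo_basis_def zero_neq_one)
  have comb: "(\<lambda>i. \<Sum>b\<in>?B. c b * b i) = (\<lambda>i. if i \<in> C then c (evo_basis i) else 0)" for c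
  proof
    fix i
    have "(\<Sum>b\<in>?B. c b * b i) = (\<Sum>k\<in>C. if k = i then c (evo_basis i) else 0)"
      unfolding sum.reindex[OF inj] by (rule sum.cong) (auto simp: evo_basis_def)
    then show "(\<Sum>b\<in>?B. c b * b i) = (if i \<in> C then c (evo_basis i) else 0)"
      using fin by simp
  qed
  show ?thesis
    unfolding has_natural_basis_def
  proof (intro exI[of _ ?B] conjI)
    show "finite ?B"
      using fin by simp
    show "?B \<subseteq> evo_carrier C"
      by auto
    show "\<forall>c. (\<lambda>i. \<Sum>b\<in>?B. c b * b i) = (\<lambda>i. 0) \<longrightarrow> (\<forall>b\<in>?B. c b = 0)"
      unfolding comb by (auto simp: fun_eq_iff)
    show "evo_carrier C = {(\<lambda>i. \<Sum>b\<in>?B. c b * b i) | c. True}"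
    proof (intro set_eqI iffI)
      fix x :: "'i \<Rightarrow> 'a" assume "x \<in> evo_carrier C"
      then have "x = (\<lambda>i. \<Sum>b\<in>?B. x (inv_into C evo_basis b) * b i)"
        unfolding comb using inv_into_f_f[OF inj] by (auto simp: evo_carrier_def fun_eq_iff)
      then show "x \<in> {(\<lambda>i. \<Sum>b\<in>?B. c b * b i) | c. True}"
        by (intro CollectI exI[of _ "\<lambda>b. x (inv_into C evo_basis b)"]) simp
    qed (auto simp: comb evo_carrier_def)
    show "\<forall>b\<in>?B. \<forall>b'\<in>?B. b \<noteq> b' \<longrightarrow> evo_mult S w b b' = (\<lambda>i. 0)"
      by (auto simp: evo_mult_def evo_basis_def fun_eq_iff split: if_splits intro!: sum.neutral)
  qed
qed

lemma evo_sq_comb_restrict: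
  assumes CS: "C \<subseteq> S" and fwd: "evo_graph S w `` C \<subseteq> C" and bwd: "(evo_graph S w)\<inverse> `` C \<subseteq> C"
    and x: "x \<in> evo_carrier C" and c: "x = evo_sq_comb S w c"
  shows "x = evo_sq_comb S w (\<lambda>i. if i \<in> C then c i else 0)"
proof
  fix j
  consider "j \<notin> S" | "j \<in> C" | "j \<in> S - C"
    by blast
  then show "x j = evo_sq_comb S w (\<lambda>i. if i \<in> C then c i else 0) j"
  proof cases
    case 1
    then show ?thesis
      using c by (simp add: evo_sq_comb_def)
  next
    case 2
    then have "w j i = 0" if "i \<in> S - C" for i
      using bwd CS that by (auto simp: evo_graph_def)
    then show ?thesis
      using c 2 CS by (auto simp: evo_sq_comb_def intro!: sum.cong)
  next
    case 3
    then have "w j i = 0" if "i \<in> C" for i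
      using fwd CS that by (auto simp: evo_graph_def)
    then have "(\<Sum>i\<in>S. (if i \<in> C then c i else 0) * w j i) = 0"
      by (intro sum.neutral) auto
    then show ?thesis
      using x 3 by (auto simp: evo_sq_comb_def evo_carrier_def)
  qed
qed

lemma simple_evo_iff_strongly_connected:
  fixes w :: "'i \<Rightarrow> 'i \<Rightarrow> 'a::field"
  assumes "finite S" and "S \<noteq> {}"
    and square: "\<And>k. k \<in> S \<Longrightarrow> evo_basis k \<in> range (evo_sq_comb S w)"
  shows "simple_evo S w \<longleftrightarrow> strongly_connected S (evo_graph S w)"
proof
  assume sc: "strongly_connected S (evo_graph S w)"
  have "\<exists>c\<in>evo_carrier S. evo_basis k = evo_sq_comb S w c" if k: "k \<in> S" for k
  proof -
    obtain c where c: "evo_basis k = evo_sq_comb S w c"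
      using square[OF k] by blast
    have "evo_graph S w `` S \<subseteq> S" "(evo_graph S w)\<inverse> `` S \<subseteq> S"
      using evo_graph_subset[of S w] by blast+
    then have "evo_basis k = evo_sq_comb S w (\<lambda>i. if i \<in> S then c i else 0)"
      by (intro evo_sq_comb_restrict[OF subset_refl _ _ _ c]) (simp_all add: k)
    then show ?thesis
      by (intro bexI[of _ "\<lambda>i. if i \<in> S then c i else 0"]) (auto simp: evo_carrier_def)
  qed
  then show "simple_evo S w"
    unfolding simple_evo_def using assms(1,2) sc evo_graph_subset[of S w]
    by (intro simple_sub_evo_carrier) (auto simp: strongly_connected_def)
qed (rule simple_evo_strongly_connected)

lemma sum_partition_single:
  assumes P: "partition_on S P" and "finite P" and C: "C \<in> P" "v \<in> C"
    and g: "\<And>C'. C' \<in> P \<Longrightarrow> v \<notin> C' \<Longrightarrow> g C' = 0"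
  shows "(\<Sum>C'\<in>P. g C') = g C"
proof -
  have "g C' = 0" if "C' \<in> P - {C}" for C'
    using that C g disjointD[OF partition_onD2[OF P]] by blast
  then show ?thesis
    using \<open>finite P\<close> C(1) by (simp add: sum.remove)
qed

lemma sum_evo_carrier_image:
  fixes g :: "('i \<Rightarrow> 'a::field) set \<Rightarrow> 'b::comm_monoid_add"
  shows "(\<Sum>I\<in>evo_carrier ` P. g I) = (\<Sum>C\<in>P. g (evo_carrier C))"
proof -
  have "inj_on (evo_carrier :: 'i set \<Rightarrow> ('i \<Rightarrow> 'a) set) P"
    by (rule inj_onI) (rule evo_carrier_inj)
  then show ?thesis
    by (simp add: sum.reindex)
qed

lemma evo_carrier_partition_decomposition:
  fixes x :: "'i \<Rightarrow> 'a::field"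
  assumes P: "partition_on S P" and finP: "finite P" and x: "x \<in> evo_carrier S"
  shows "\<exists>f. (\<forall>I\<in>evo_carrier ` P. f I \<in> I) \<and> x = (\<lambda>i. \<Sum>I\<in>evo_carrier ` P. f I i)"
proof (intro exI conjI)
  define f where "f I = (\<lambda>v. if evo_basis v \<in> I then x v else 0)" for I :: "('i \<Rightarrow> 'a) set"
  have f: "f (evo_carrier C) = (\<lambda>v. if v \<in> C then x v else 0)" for C
    by (simp add: f_def)
  then show "\<forall>I\<in>evo_carrier ` P. f I \<in> I"
    by (auto simp: evo_carrier_def)
  have "x v = (\<Sum>C\<in>P. f (evo_carrier C) v)" for v
  proof (cases "v \<in> S")
    case True
    then obtain C where "C \<in> P" "v \<in> C"
      using partition_onD1[OF P] by blast
    then show ?thesis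
      by (subst sum_partition_single[OF P finP]) (auto simp: f)
  next
    case False
    then have "v \<notin> C" if "C \<in> P" for C
      using partition_onD1[OF P] that by blast
    moreover have "x v = 0"
      using x False by (simp add: evo_carrier_def)
    ultimately show ?thesis
      by (auto simp: f intro!: sum.neutral)
  qed
  then show "x = (\<lambda>i. \<Sum>I\<in>evo_carrier ` P. f I i)"
    by (simp add: sum_evo_carrier_image fun_eq_iff)
qed

lemma evo_carrier_partition_independent:
  fixes f :: "('i \<Rightarrow> 'a::field) set \<Rightarrow> 'i \<Rightarrow> 'a"
  assumes P: "partition_on S P" and finP: "finite P"
    and f: "\<forall>I\<in>evo_carrier ` P. f I \<in> I" and sum: "(\<lambda>i. \<Sum>I\<in>evo_carrier ` P. f I i) = (\<lambda>i. 0)"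
    and I: "I \<in> evo_carrier ` P"
  shows "f I = (\<lambda>i. 0)"
proof
  fix v
  obtain C where C: "C \<in> P" "I = evo_carrier C"
    using I by blast
  have zero: "f (evo_carrier C') v = 0" if "C' \<in> P" "v \<notin> C'" for C'
    using f that by (auto simp: evo_carrier_def)
  show "f I v = 0"
  proof (cases "v \<in> C")
    case True
    have "f I v = (\<Sum>C'\<in>P. f (evo_carrier C') v)"
      using sum_partition_single[OF P finP C(1) True, of "\<lambda>C'. f (evo_carrier C') v"] zero C(2)
      by simp
    also have "\<dots> = 0"
      using fun_cong[OF sum, of v] by (simp add: sum_evo_carrier_image)
    finally show ?thesis .
  qed (use zero C in simp)
qed

lemma semisimple_evo_if_partition:
  fixes w :: "'i \<Rightarrow> 'i \<Rightarrow> 'a::field"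
  assumes fin: "finite S" and P: "partition_on S P"
    and closed: "\<And>C. C \<in> P \<Longrightarrow> evo_graph S w `` C \<subseteq> C"
    and simple: "\<And>C. C \<in> P \<Longrightarrow> simple_sub S w (evo_carrier C)"
  shows "semisimple_evo S w"
proof -
  have finP: "finite P"
    using finite_elements[OF fin P] .
  have CS: "C \<subseteq> S" if "C \<in> P" for C
    using partition_onD1[OF P] that by blast
  show ?thesis
    unfolding semisimple_evo_def
  proof (intro exI[of _ "evo_carrier ` P"] conjI)
    show "finite (evo_carrier ` P :: ('i \<Rightarrow> 'a) set set)"
      using finP by simp
    show "\<forall>I\<in>evo_carrier ` P. evo_ideal_of S w (evo_carrier S) I \<and> simple_sub S w I \<and> has_natural_basis S w I"
      using evo_ideal_evo_carrier[OF CS closed] simple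
        has_natural_basis_evo_carrier[OF finite_subset[OF CS fin]] by blast
    show "\<forall>x\<in>evo_carrier S. \<exists>f. (\<forall>I\<in>evo_carrier ` P. f I \<in> I)
        \<and> x = (\<lambda>i. \<Sum>I\<in>evo_carrier ` P. f I i)"
      using evo_carrier_partition_decomposition[OF P finP] by blast
    show "\<forall>f. (\<forall>I\<in>evo_carrier ` P. f I \<in> I) \<and> (\<lambda>i. \<Sum>I\<in>evo_carrier ` P. f I i) = (\<lambda>i. 0)
        \<longrightarrow> (\<forall>I\<in>evo_carrier ` P. f I = (\<lambda>i. 0))"
      using evo_carrier_partition_independent[OF P finP] by blast
  qed
qed

lemma semisimple_evo_if_trancl_sym:
  fixes w :: "'i \<Rightarrow> 'i \<Rightarrow> 'a::field"
  assumes fin: "finite S" and sym: "sym ((evo_graph S w)\<^sup>+)"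
    and refl: "\<And>u. u \<in> S \<Longrightarrow> (u, u) \<in> (evo_graph S w)\<^sup>+"
    and square: "\<And>k. k \<in> S \<Longrightarrow> evo_basis k \<in> range (evo_sq_comb S w)"
  shows "semisimple_evo S w"
proof -
  let ?E = "evo_graph S w"
  let ?R = "?E\<^sup>+"
  have R: "?R \<subseteq> S \<times> S"
    by (rule trancl_subset_Sigma[OF evo_graph_subset])
  have "equiv S ?R"
    using R refl sym by (intro equivI refl_onI trans_trancl) auto
  then have P: "partition_on S (S // ?R)"
    by (rule partition_on_quotient)
  show ?thesis
  proof (rule semisimple_evo_if_partition[OF fin P])
    fix C assume "C \<in> S // ?R"
    then obtain u where u: "u \<in> S" "C = ?R `` {u}"
      by (rule quotientE)
    show fwd: "?E `` C \<subseteq> C"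
      using u by (auto intro: trancl_into_trancl)
    have bwd: "?E\<inverse> `` C \<subseteq> C"
      using u sym by (auto dest: symD intro: trancl_trans)
    have CS: "C \<subseteq> S"
      using u R by blast
    have sc: "\<forall>i\<in>C. \<forall>k\<in>C. (i, k) \<in> ?R"
      using u sym by (auto dest: symD intro: trancl_trans)
    have "\<exists>c\<in>evo_carrier C. evo_basis k = evo_sq_comb S w c" if k: "k \<in> C" for k
    proof -
      obtain c where c: "evo_basis k = evo_sq_comb S w c"
        using square k CS by blast
      have "evo_basis k = evo_sq_comb S w (\<lambda>i. if i \<in> C then c i else 0)"
        by (rule evo_sq_comb_restrict[OF CS fwd bwd _ c]) (simp add: k)
      then show ?thesis
        by (intro bexI[of _ "\<lambda>i. if i \<in> C then c i else 0"]) (auto simp: evo_carrier_def)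
    qed
    moreover have "C \<noteq> {}"
      using u refl by blast
    ultimately show "simple_sub S w (evo_carrier C)"
      using simple_sub_evo_carrier[OF fin CS _ fwd sc] by blast
  qed
qed

section \<open>Tensor products of evolution algebras\<close>

lemma evo_sq_comb_tensor_struct:
  fixes w1 :: "'i \<Rightarrow> 'i \<Rightarrow> 'a::field" and w2 :: "'j \<Rightarrow> 'j \<Rightarrow> 'a"
  assumes "finite S1" and "finite S2"
  shows "evo_sq_comb (S1 \<times> S2) (tensor_struct w1 w2) (\<lambda>(k, l). c k * d l)
    = (\<lambda>(j, q). evo_sq_comb S1 w1 c j * evo_sq_comb S2 w2 d q)"
proof (intro ext, clarify)
  fix j q
  have "(\<Sum>(k, l)\<in>S1 \<times> S2. c k * d l * (w1 j k * w2 q l))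
      = (\<Sum>k\<in>S1. c k * w1 j k) * (\<Sum>l\<in>S2. d l * w2 q l)"
    by (simp add: sum.cartesian_product[symmetric] sum_product algebra_simps)
  then show "evo_sq_comb (S1 \<times> S2) (tensor_struct w1 w2) (\<lambda>(k, l). c k * d l) (j, q)
    = evo_sq_comb S1 w1 c j * evo_sq_comb S2 w2 d q"
    by (auto simp: evo_sq_comb_def tensor_struct_def case_prod_beta)
qed

lemma evo_basis_in_square_tensor:
  fixes w1 :: "'i \<Rightarrow> 'i \<Rightarrow> 'a::field" and w2 :: "'j \<Rightarrow> 'j \<Rightarrow> 'a"
  assumes "finite S1" and "finite S2"
    and square1: "evo_carrier S1 \<subseteq> range (evo_sq_comb S1 w1)"
    and square2: "evo_carrier S2 \<subseteq> range (evo_sq_comb S2 w2)"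
    and u: "u \<in> S1 \<times> S2"
  shows "evo_basis u \<in> range (evo_sq_comb (S1 \<times> S2) (tensor_struct w1 w2))"
proof -
  obtain i p where ip: "u = (i, p)" "i \<in> S1" "p \<in> S2"
    using u by blast
  then obtain c d where cd: "evo_basis i = evo_sq_comb S1 w1 c" "evo_basis p = evo_sq_comb S2 w2 d"
    using square1 square2 evo_basis_in_evo_carrier_iff by (metis rangeE subsetD)
  have "evo_basis u = (\<lambda>(j, q). evo_basis i j * evo_basis p q)"
    unfolding ip by (auto simp: evo_basis_def fun_eq_iff)
  also have "\<dots> = (\<lambda>(j, q). evo_sq_comb S1 w1 c j * evo_sq_comb S2 w2 d q)"
    unfolding cd ..
  also have "\<dots> = evo_sq_comb (S1 \<times> S2) (tensor_struct w1 w2) (\<lambda>(k, l). c k * d l)"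
    by (rule evo_sq_comb_tensor_struct[symmetric]) fact+
  finally show ?thesis
    by simp
qed

theorem theorem4p3:
  fixes S1 :: "'i set" and S2 :: "'j set"
    and w1 :: "'i \<Rightarrow> 'i \<Rightarrow> 'a::field" and w2 :: "'j \<Rightarrow> 'j \<Rightarrow> 'a"
  assumes "finite S1" and "finite S2"
    and "simple_evo S1 w1" and "simple_evo S2 w2"
  shows "(simple_evo (S1 \<times> S2) (tensor_struct w1 w2)
            \<longleftrightarrow> gcd (period S1 w1) (period S2 w2) = 1)
    \<and> ((\<exists>m1\<in>closed_path_lengths S1 w1. \<exists>m2\<in>closed_path_lengths S2 w2. coprime m1 m2)
            \<longrightarrow> simple_evo (S1 \<times> S2) (tensor_struct w1 w2))
    \<and> semisimple_evo (S1 \<times> S2) (tensor_struct w1 w2)"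
proof -
  let ?S = "S1 \<times> S2" and ?w = "tensor_struct w1 w2"
  let ?E1 = "evo_graph S1 w1" and ?E2 = "evo_graph S2 w2"
  have sc1: "strongly_connected S1 ?E1" and sc2: "strongly_connected S2 ?E2"
    using assms(3,4) by (simp_all add: simple_evo_strongly_connected)
  have ne: "S1 \<noteq> {}" "S2 \<noteq> {}"
    using assms(3,4) by (simp_all add: simple_evo_nonempty)
  have graph: "evo_graph ?S ?w = tensor_rel ?E1 ?E2"
    by (rule evo_graph_tensor_struct)
  have square: "evo_basis u \<in> range (evo_sq_comb ?S ?w)" if "u \<in> ?S" for u
    using assms(1,2) simple_evo_square[OF assms(3)] simple_evo_square[OF assms(4)] that
    by (rule evo_basis_in_square_tensor)
  have "simple_evo ?S ?w \<longleftrightarrow> strongly_connected ?S (tensor_rel ?E1 ?E2)"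
    using simple_evo_iff_strongly_connected[OF _ _ square] assms(1,2) ne unfolding graph by simp
  also have "\<dots> \<longleftrightarrow> gcd (period S1 w1) (period S2 w2) = 1"
    unfolding period_def closed_path_lengths_eq_cycle_lengths
    by (rule strongly_connected_tensor_rel_iff[OF sc1 sc2 evo_graph_subset evo_graph_subset ne])
  finally have "simple_evo ?S ?w \<longleftrightarrow> gcd (period S1 w1) (period S2 w2) = 1" .
  moreover have "gcd (period S1 w1) (period S2 w2) = 1"
    if "m1 \<in> closed_path_lengths S1 w1" "m2 \<in> closed_path_lengths S2 w2" "coprime m1 m2" for m1 m2
    using coprime_divisors[OF Gcd_dvd[OF that(1)] Gcd_dvd[OF that(2)] that(3)]
    unfolding period_def by (simp add: coprime_iff_gcd_eq_1)
  moreover have "semisimple_evo ?S ?w"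
    using assms(1,2) square sym_trancl_tensor_rel[OF sc1 sc2 evo_graph_subset evo_graph_subset]
      trancl_tensor_rel_refl[OF sc1 sc2]
    by (intro semisimple_evo_if_trancl_sym) (auto simp: graph)
  ultimately show ?thesis
    by blast
qed

end
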